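(* Let $\mathbf{B}\in\mathbb{R}^{n\times n}$ be a nonsingular matrix, $\mathcal L=\mathbf{B}\mathbb{Z}^n$, $s>0$, $\mathbf{c}\in\mathbb{R}^n$ and $\mathcal R>0$. Let $\mathcal X_{\mathcal R}:=\{\mathbf{x}\in\mathbb{Z}^n:\|\mathbf{B}\mathbf{x}-\mathbf{c}\|\le\mathcal R\}$, and assume $\mathcal X_{\mathcal R}\neq\emptyset$ (so that $Q(\mathcal X_{\mathcal R})>0$ and $\rho_{s,\mathbf c}(\mathbf B\mathcal X_{\mathcal R})>0$). Define the probability distributions on $\mathbb{Z}^n$ (both zero outside $\mathcal X_{\mathcal R}$) $$\pi_{\mathcal R}(\mathbf x)=\frac{\rho_{s,\mathbf c}(\mathbf B\mathbf x)}{\rho_{s,\mathbf c}(\mathbf B\mathcal X_{\mathcal R})},\qquad Q_{\mathcal R}(\mathbf x)=\frac{Q(\mathbf x)}{Q(\mathcal X_{\mathcal R})}\qquad(\mathbf x\in\mathcal X_{\mathcal R}),$$ where $Q(\mathcal X_{\mathcal R})=\sum_{\mathbf x\in\mathcal X_{\mathcal R}}Q(\mathbf x)$ and $\rho_{s,\mathbf c}(\mathbf B\mathcal X_{\mathcal R})=\sum_{\mathbf x\in\mathcal X_{\mathcal R}}\rho_{s,\mathbf c}(\mathbf B\mathbf x)$. Set $$\Delta_{\mathcal R}:=\frac{\rho_{s,\mathbf c}(\mathbf B\mathcal X_{\mathcal R})}{\prod_{i=1}^n\rho_{s_i}(\mathbb Z)},\qquad p_{\mathcal R}:=\frac{\Delta_{\mathcal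 R}}{Q(\mathcal X_{\mathcal R})}.$$ Then $p_{\mathcal R}\in(0,1]$ (equivalently $Q(\mathcal X_{\mathcal R})\ge\Delta_{\mathcal R}>0$), and for every $\mathbf x\in\mathbb Z^n$, $$Q_{\mathcal R}(\mathbf x)\ge p_{\mathcal R}\,\pi_{\mathcal R}(\mathbf x).$$
   Context: For $s>0$ and $c\in\mathbb{R}^k$, $\rho_{s,c}(y)=\exp(-\pi\|y-c\|^2/s^2)$ for $y\in\mathbb R^k$, $\rho_s:=\rho_{s,0}$, and for a countable set $S$, $\rho_{s,c}(S)=\sum_{y\in S}\rho_{s,c}(y)$. Let $\mathbf B=\mathbf Q\mathbf R$ be a QR decomposition ($\mathbf Q$ orthogonal, $\mathbf R=(r_{ij})$ upper triangular), $\mathbf c'=\mathbf Q^{\top}\mathbf c$. For $\mathbf x\in\mathbb Z^n$ and $i=1,\dots,n$, put $s_i:=s/|r_{ii}|$ and $\mu_i(\mathbf x_{>i}):=\big(c'_i-\sum_{j>i}r_{ij}x_j\big)/r_{ii}$. The Klein distribution on $\mathbb Z^n$ is $$Q(\mathbf x):=\prod_{i=1}^n\frac{\rho_{s_i,\mu_i(\mathbf x_{>i})}(x_i)}{\rho_{s_i,\mu_i(\mathbf x_{>i})}(\mathbb Z)}=\frac{\rho_{s,\mathbf c}(\mathbf B\mathbf x)}{\prod_{i=1}^n\rho_{s_i,\mu_i(\mathbf x_{>i})}(\mathbb Z)},$$ using the identity $\rho_{s,\mathbf c}(\mathbf B\mathbf x)=\prod_{i=1}^n\rho_{s_i,\mu_i(\mathbf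 x_{>i})}(x_i)$. *)

theory Defs
  imports "HOL-Analysis.Analysis"
begin

text \<open>Dimension n is the cardinality of a finite, well-ordered index type 'n;
  indices are ordered by the wellorder (playing the role of 1 < ... < n).\<close>

definition gauss :: "real \<Rightarrow> 'a::real_normed_vector \<Rightarrow> 'a \<Rightarrow> real" where
  "gauss s c y = exp (- pi * (norm (y - c))^2 / s^2)"

definition gaussZ :: "real \<Rightarrow> real \<Rightarrow> real" where
  "gaussZ s mu = infsum (\<lambda>k::int. gauss s mu (of_int k)) UNIV"

definition ivec :: "(int,'n::{finite,wellorder}) vec \<Rightarrow> (real,'n) vec" where
  "ivec x = (\<chi> i. of_int (x $ i))"

text \<open>mu_i(x_{>i}) for the QR decomposition B = Q R, c' = Q^T c\<close>
definition klein_mu :: "((real,'n::{finite,wellorder}) vec,'n) vec \<Rightarrow> ((real,'n) vec,'n) vec \<Rightarrow> (real,'n) vec \<Rightarrow> (int,'n) vec \<Rightarrow> 'n \<Rightarrow> real" where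
  "klein_mu Qm R c x i =
     ((transpose Qm *v c) $ i - (\<Sum>j\<in>{j. i < j}. R $ i $ j * of_int (x $ j))) / R $ i $ i"

definition klein :: "((real,'n::{finite,wellorder}) vec,'n) vec \<Rightarrow> ((real,'n) vec,'n) vec \<Rightarrow> real \<Rightarrow> (real,'n) vec \<Rightarrow> (int,'n) vec \<Rightarrow> real" where
  "klein Qm R s c x =
     (\<Prod>i\<in>(UNIV::'n set).
        gauss (s / \<bar>R $ i $ i\<bar>) (klein_mu Qm R c x i) (of_int (x $ i))
        / gaussZ (s / \<bar>R $ i $ i\<bar>) (klein_mu Qm R c x i))"

definition lat_ball :: "((real,'n::{finite,wellorder}) vec,'n) vec \<Rightarrow> (real,'n) vec \<Rightarrow> real \<Rightarrow> ((int,'n) vec) set" where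
  "lat_ball B c Rad = {x. norm (B *v ivec x - c) \<le> Rad}"

definition pi_R :: "((real,'n::{finite,wellorder}) vec,'n) vec \<Rightarrow> real \<Rightarrow> (real,'n) vec \<Rightarrow> real \<Rightarrow> (int,'n) vec \<Rightarrow> real" where
  "pi_R B s c Rad x =
     (if x \<in> lat_ball B c Rad
      then gauss s c (B *v ivec x) / (\<Sum>y\<in>lat_ball B c Rad. gauss s c (B *v ivec y))
      else 0)"

definition Q_R :: "((real,'n::{finite,wellorder}) vec,'n) vec \<Rightarrow> ((real,'n) vec,'n) vec \<Rightarrow> ((real,'n) vec,'n) vec \<Rightarrow> real \<Rightarrow> (real,'n) vec \<Rightarrow> real \<Rightarrow> (int,'n) vec \<Rightarrow> real" where
  "Q_R B Qm R s c Rad x =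
     (if x \<in> lat_ball B c Rad
      then klein Qm R s c x / (\<Sum>y\<in>lat_ball B c Rad. klein Qm R s c y)
      else 0)"

definition Delta_R :: "((real,'n::{finite,wellorder}) vec,'n) vec \<Rightarrow> ((real,'n) vec,'n) vec \<Rightarrow> real \<Rightarrow> (real,'n) vec \<Rightarrow> real \<Rightarrow> real" where
  "Delta_R B R s c Rad =
     (\<Sum>y\<in>lat_ball B c Rad. gauss s c (B *v ivec y))
     / (\<Prod>i\<in>(UNIV::'n set). gaussZ (s / \<bar>R $ i $ i\<bar>) 0)"

definition p_R :: "((real,'n::{finite,wellorder}) vec,'n) vec \<Rightarrow> ((real,'n) vec,'n) vec \<Rightarrow> ((real,'n) vec,'n) vec \<Rightarrow> real \<Rightarrow> (real,'n) vec \<Rightarrow> real \<Rightarrow> real" where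
  "p_R B Qm R s c Rad = Delta_R B R s c Rad / (\<Sum>y\<in>lat_ball B c Rad. klein Qm R s c y)"

end

theory Submission
  imports Defs
begin

(* The heart of the matter is that the discrete Gaussian mass rho_{s_i,mu}(Z) is largest at mu = 0.
   Instead of Poisson summation we use that the Gaussian kernel exp (-a (t - u)^2) is positive
   semidefinite (expand exp (2 a t u) as a power series): the quadratic form with weights +1 at the
   integers of a window {-N..N} and -1 at their translates by c shows that the c-shifted double sum
   over the window is at most the unshifted one, and letting N grow gives theta(c) <= theta(0).
   Consequently the Klein normaliser prod_i rho_{s_i,mu_i}(Z) is at most prod_i rho_{s_i}(Z), so
   Q(x) >= rho_{s,c}(B x) / prod_i rho_{s_i}(Z) for every x; summing over X_R and normalising
   yields both claims. *)

lemma gauss_kernel_pos_semidef: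
  fixes a :: real and x w :: "'i \<Rightarrow> real"
  assumes a: "0 \<le> a" and F: "finite F"
  shows "0 \<le> (\<Sum>j\<in>F. \<Sum>k\<in>F. w j * w k * exp (- a * (x j - x k)^2))"
proof -
  define \<phi> where "\<phi> n t = exp (- a * t^2) * t^n" for n :: nat and t :: real
  define \<gamma> where "\<gamma> n = (2*a)^n / fact n" for n :: nat
  have kernel: "(\<lambda>n. \<gamma> n * \<phi> n t * \<phi> n u) sums exp (- a * (t - u)^2)" for t u
  proof -
    have "(\<lambda>n. exp (- a * t^2) * exp (- a * u^2) * ((2*a*t*u)^n /\<^sub>R fact n)) sums
          (exp (- a * t^2) * exp (- a * u^2) * exp (2*a*t*u))"
      by (intro sums_mult exp_converges)
    moreover have "exp (- a * t^2) * exp (- a * u^2) * exp (2*a*t*u) = exp (- a * (t - u)^2)"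
      by (simp add: exp_add[symmetric] power2_eq_square algebra_simps)
    ultimately show ?thesis
      by (simp add: \<gamma>_def \<phi>_def power_mult_distrib divide_inverse algebra_simps)
  qed
  have sums: "(\<lambda>n. \<Sum>j\<in>F. \<Sum>k\<in>F. w j * w k * (\<gamma> n * \<phi> n (x j) * \<phi> n (x k)))
          sums (\<Sum>j\<in>F. \<Sum>k\<in>F. w j * w k * exp (- a * (x j - x k)^2))"
    by (intro sums_sum sums_mult kernel)
  have "0 \<le> (\<Sum>j\<in>F. \<Sum>k\<in>F. w j * w k * (\<gamma> n * \<phi> n (x j) * \<phi> n (x k)))" for n
  proof -
    have "(\<Sum>j\<in>F. \<Sum>k\<in>F. w j * w k * (\<gamma> n * \<phi> n (x j) * \<phi> n (x k)))
          = \<gamma> n * (\<Sum>j\<in>F. w j * \<phi> n (x j))^2"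
      by (simp add: power2_eq_square sum_product sum_distrib_left algebra_simps)
    moreover have "0 \<le> \<gamma> n"
      using a by (simp add: \<gamma>_def)
    ultimately show ?thesis
      by simp
  qed
  then show ?thesis
    using sums_le[OF _ sums_zero sums] by simp
qed

lemma gauss_kernel_shifted_double_sum_le:
  fixes a c :: real and x :: "'i \<Rightarrow> real"
  assumes a: "0 \<le> a" and F: "finite F"
  shows "(\<Sum>j\<in>F. \<Sum>k\<in>F. exp (- a * (x j - x k - c)^2))
       \<le> (\<Sum>j\<in>F. \<Sum>k\<in>F. exp (- a * (x j - x k)^2))"
proof -
  define y where "y = (\<lambda>(j, b). x j + (if b then c else 0))"
  define w :: "'i \<times> bool \<Rightarrow> real" where "w = (\<lambda>(j, b). if b then -1 else 1)"
  define K where "K t = exp (- a * t^2)" for t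
  have split: "(\<Sum>p\<in>F \<times> UNIV. f p) = (\<Sum>j\<in>F. f (j, False) + f (j, True))"
    for f :: "'i \<times> bool \<Rightarrow> real"
    using sum.cartesian_product[of "\<lambda>j b. f (j, b)" UNIV F] by (simp add: UNIV_bool add.commute)
  have K_sym: "K (x j + c - x k) = K (x k - x j - c)" for j k
    unfolding K_def by (simp add: power2_eq_square algebra_simps)
  have K_assoc: "K (x j - (x k + c)) = K (x j - x k - c)" for j k
    by (simp add: algebra_simps)
  have swap: "(\<Sum>j\<in>F. \<Sum>k\<in>F. K (x k - x j - c)) = (\<Sum>j\<in>F. \<Sum>k\<in>F. K (x j - x k - c))"
    by (rule sum.swap)
  have "0 \<le> (\<Sum>p\<in>F \<times> UNIV. \<Sum>q\<in>F \<times> UNIV. w p * w q * K (y p - y q))"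
    unfolding K_def using a F by (intro gauss_kernel_pos_semidef) auto
  also have "\<dots> = (\<Sum>j\<in>F. \<Sum>k\<in>F. K (x j - x k) - K (x j - (x k + c)))
                   + (\<Sum>j\<in>F. \<Sum>k\<in>F. K (x j - x k) - K (x j + c - x k))"
    by (simp add: split y_def w_def sum.distrib)
  also have "\<dots> = 2 * (\<Sum>j\<in>F. \<Sum>k\<in>F. K (x j - x k)) - 2 * (\<Sum>j\<in>F. \<Sum>k\<in>F. K (x j - x k - c))"
    by (simp only: K_assoc K_sym sum_subtractf swap)
  finally show ?thesis unfolding K_def by simp
qed

lemma summable_on_int_geometric:
  fixes r :: real
  assumes "0 \<le> r" and "r < 1"
  shows "(\<lambda>k::int. r ^ nat \<bar>k\<bar>) summable_on UNIV"
proof -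
  have UNIV_int: "(UNIV::int set) = range int \<union> range (\<lambda>n. - int (Suc n))"
    by (auto simp: image_def) presburger
  have "(\<lambda>n. r ^ n) summable_on (UNIV::nat set)" and "(\<lambda>n. r * r ^ n) summable_on (UNIV::nat set)"
    using assms by (auto simp: summable_on_UNIV_nonneg_real_iff intro!: summable_mult summable_geometric)
  then have "(\<lambda>k::int. r ^ nat \<bar>k\<bar>) summable_on range int"
    and "(\<lambda>k::int. r ^ nat \<bar>k\<bar>) summable_on range (\<lambda>n. - int (Suc n))"
    by (auto simp: summable_on_reindex o_def inj_on_def simp del: of_nat_Suc)
  then show ?thesis
    unfolding UNIV_int by (rule summable_on_Un_disjoint) auto
qed

lemma summable_on_int_gauss:
  fixes a c :: real
  assumes a: "0 < a"
  shows "(\<lambda>k::int. exp (- a * (of_int k - c)^2)) summable_on UNIV"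
proof (rule summable_on_comparison_test)
  show "(\<lambda>k::int. exp (a * c^2) * exp (-a/2) ^ nat \<bar>k\<bar>) summable_on UNIV"
    using a by (intro summable_on_cmult_right summable_on_int_geometric) auto
  fix k :: int
  have "\<bar>k\<bar> \<le> k^2"
  proof (cases "k = 0")
    case False
    then have "\<bar>k\<bar> \<le> \<bar>k\<bar>^2"
      by (intro self_le_power) auto
    then show ?thesis by simp
  qed simp
  then have "of_int \<bar>k\<bar> \<le> (of_int k :: real)^2"
    by (metis of_int_le_iff of_int_power)
  moreover have "(of_int k :: real)^2 = 2 * (of_int k - c)^2 + 2 * c^2 - (of_int k - 2*c)^2"
    by (simp add: power2_eq_square algebra_simps)
  ultimately have "of_int \<bar>k\<bar> / 2 - c^2 \<le> (of_int k - c)^2"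
    using zero_le_power2[of "of_int k - 2*c"] by linarith
  then have "a * (of_int \<bar>k\<bar> / 2 - c^2) \<le> a * (of_int k - c)^2"
    using a by (intro mult_left_mono) auto
  then have "- a * (of_int k - c)^2 \<le> a * c^2 + real (nat \<bar>k\<bar>) * (-a/2)"
    by (simp add: algebra_simps)
  then show "exp (- a * (of_int k - c)^2) \<le> exp (a * c^2) * exp (-a/2) ^ nat \<bar>k\<bar>"
    by (simp add: exp_add[symmetric] exp_of_nat_mult[symmetric])
qed simp

lemma gauss_int_sum_le_theta:
  fixes a :: real and F :: "int set"
  assumes a: "0 < a" and F: "finite F"
  shows "(\<Sum>k\<in>F. exp (- a * (of_int j - of_int k)^2)) \<le> (\<Sum>\<^sub>\<infinity>k::int. exp (- a * (of_int k)^2))"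
proof -
  have reflect: "bij_betw (\<lambda>k::int. j - k) UNIV UNIV"
    by (rule bij_betwI[where g="\<lambda>k. j - k"]) auto
  have summable: "(\<lambda>k::int. exp (- a * (of_int j - of_int k)^2)) summable_on UNIV"
    using summable_on_int_gauss[OF a, of "of_int j"] by (simp add: power2_commute)
  have "(\<Sum>k\<in>F. exp (- a * (of_int j - of_int k)^2))
        \<le> (\<Sum>\<^sub>\<infinity>k::int. exp (- a * (of_int j - of_int k)^2))"
    using summable F by (rule finite_sum_le_infsum) auto
  also have "\<dots> = (\<Sum>\<^sub>\<infinity>k::int. exp (- a * (of_int k)^2))"
    using infsum_reindex_bij_betw[OF reflect, of "\<lambda>k. exp (- a * (of_int k)^2)"] by simp
  finally show ?thesis .
qed

lemma gauss_int_window_sum_le: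
  fixes a c :: real and F :: "int set"
  assumes a: "0 < a" and F: "F \<subseteq> {-M..M}" and M: "0 \<le> M" and NM: "M \<le> N"
  shows "of_int (2 * (N - M) + 1) * (\<Sum>d\<in>F. exp (- a * (of_int d - c)^2))
       \<le> of_int (2 * N + 1) * (\<Sum>\<^sub>\<infinity>k::int. exp (- a * (of_int k)^2))"
proof -
  define g where "g t = exp (- a * t^2)" for t :: real
  define \<sigma> where "\<sigma> = (\<Sum>d\<in>F. g (of_int d - c))"
  define T where "T = (\<Sum>\<^sub>\<infinity>k::int. g (of_int k))"
  have row: "\<sigma> \<le> (\<Sum>k\<in>{-N..N}. g (of_int j - of_int k - c))" if j: "j \<in> {-(N-M)..N-M}" for j
  proof -
    have "\<sigma> = (\<Sum>k\<in>(\<lambda>d. j - d) ` F. g (of_int j - of_int k - c))"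
      unfolding \<sigma>_def by (subst sum.reindex) (auto simp: inj_on_def)
    also have "\<dots> \<le> (\<Sum>k\<in>{-N..N}. g (of_int j - of_int k - c))"
      using F j by (intro sum_mono2) (auto simp: g_def)
    finally show ?thesis .
  qed
  have "of_int (2 * (N - M) + 1) * \<sigma> = (\<Sum>j\<in>{-(N-M)..N-M}. \<sigma>)"
    using NM by simp
  also have "\<dots> \<le> (\<Sum>j\<in>{-(N-M)..N-M}. \<Sum>k\<in>{-N..N}. g (of_int j - of_int k - c))"
    by (rule sum_mono) (rule row)
  also have "\<dots> \<le> (\<Sum>j\<in>{-N..N}. \<Sum>k\<in>{-N..N}. g (of_int j - of_int k - c))"
    using M by (intro sum_mono2) (auto simp: g_def intro: sum_nonneg)
  also have "\<dots> \<le> (\<Sum>j\<in>{-N..N}. \<Sum>k\<in>{-N..N}. g (of_int j - of_int k))"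
    unfolding g_def using a by (intro gauss_kernel_shifted_double_sum_le) auto
  also have "\<dots> \<le> (\<Sum>j\<in>{-N..N}. T)"
    unfolding g_def T_def using a by (intro sum_mono gauss_int_sum_le_theta) auto
  also have "\<dots> = of_int (2 * N + 1) * T"
    using M NM by simp
  finally show ?thesis unfolding \<sigma>_def T_def g_def .
qed

lemma gauss_int_theta_le:
  fixes a c :: real
  assumes a: "0 < a"
  shows "(\<Sum>\<^sub>\<infinity>k::int. exp (- a * (of_int k - c)^2)) \<le> (\<Sum>\<^sub>\<infinity>k::int. exp (- a * (of_int k)^2))"
proof (rule infsum_le_finite_sums[OF summable_on_int_gauss[OF a]])
  fix F :: "int set"
  assume F: "finite F"
  define \<sigma> where "\<sigma> = (\<Sum>d\<in>F. exp (- a * (of_int d - c)^2))"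
  define T where "T = (\<Sum>\<^sub>\<infinity>k::int. exp (- a * (of_int k)^2))"
  define M where "M = (\<Sum>k\<in>F. \<bar>k\<bar>)"
  have M: "0 \<le> M"
    unfolding M_def by (simp add: sum_nonneg)
  have "\<bar>k\<bar> \<le> M" if "k \<in> F" for k
    unfolding M_def using F that by (intro member_le_sum) auto
  then have FM: "F \<subseteq> {-M..M}"
    by (force simp: abs_le_iff)
  have T: "0 \<le> T"
    unfolding T_def by (rule infsum_nonneg) simp
  show "\<sigma> \<le> T"
  proof (rule ccontr)
    assume "\<not> \<sigma> \<le> T"
    then obtain n :: nat where n: "2 * of_int M * T < of_nat n * (\<sigma> - T)"
      using ex_less_of_nat_mult[of "\<sigma> - T"] by auto
    have "of_nat n * (\<sigma> - T) \<le> (2 * of_nat n + 1) * (\<sigma> - T)"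
      using \<open>\<not> \<sigma> \<le> T\<close> by (intro mult_right_mono) auto
    also have "\<dots> \<le> 2 * of_int M * T"
      using gauss_int_window_sum_le[OF a FM M, of "M + int n" c]
      by (simp add: \<sigma>_def T_def algebra_simps)
    finally show False
      using n by simp
  qed
qed

lemma gauss_pos: "0 < gauss s c y"
  by (simp add: gauss_def)

lemma gaussZ_eq_theta:
  assumes "0 < s"
  shows "gaussZ s \<mu> = (\<Sum>\<^sub>\<infinity>k::int. exp (- (pi / s^2) * (of_int k - \<mu>)^2))"
  unfolding gaussZ_def gauss_def by (rule infsum_cong) (simp add: power2_abs)

lemma gaussZ_le_gaussZ_0:
  assumes "0 < s"
  shows "gaussZ s \<mu> \<le> gaussZ s 0"
  using gauss_int_theta_le[of "pi / s^2" \<mu>] assms by (simp add: gaussZ_eq_theta)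

lemma gaussZ_pos:
  assumes "0 < s"
  shows "0 < gaussZ s \<mu>"
proof -
  have "0 < (\<Sum>k\<in>{0::int}. exp (- (pi / s^2) * (of_int k - \<mu>)^2))"
    by simp
  also have "\<dots> \<le> (\<Sum>\<^sub>\<infinity>k::int. exp (- (pi / s^2) * (of_int k - \<mu>)^2))"
    using summable_on_int_gauss[of "pi / s^2" \<mu>] assms
    by (intro finite_sum_le_infsum) auto
  finally show ?thesis
    using assms by (simp add: gaussZ_eq_theta)
qed

lemma finite_int_vecs_norm_le:
  "finite {x :: (int, 'n::{finite,wellorder}) vec. norm (ivec x) \<le> r}"
proof -
  define L where "L = \<lceil>r\<rceil>"
  have "{x :: (int, 'n) vec. norm (ivec x) \<le> r} \<subseteq> vec_lambda ` Pi\<^sub>E UNIV (\<lambda>_. {-L..L})"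
  proof
    fix x
    assume "x \<in> {x. norm (ivec x) \<le> r}"
    then have "\<bar>of_int (x $ i)\<bar> \<le> r" for i
      using component_le_norm_cart[of "ivec x" i] by (simp add: ivec_def)
    then have "of_int (x $ i) \<le> r" "of_int (- x $ i) \<le> r" for i
      by (auto simp: abs_le_iff)
    then have "x $ i \<le> L" "- x $ i \<le> L" for i
      unfolding L_def by (meson le_of_int_ceiling of_int_le_iff order.trans)+
    then have "x $ i \<in> {-L..L}" for i
      by (metis atLeastAtMost_iff minus_le_iff)
    then show "x \<in> vec_lambda ` Pi\<^sub>E UNIV (\<lambda>_. {-L..L})"
      by (intro image_eqI[where x="vec_nth x"]) auto
  qed
  moreover have "finite (vec_lambda ` Pi\<^sub>E UNIV (\<lambda>_. {-L..L}))"
    by (intro finite_imageI finite_PiE) auto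
  ultimately show ?thesis
    by (rule finite_subset)
qed

lemma finite_lat_ball:
  fixes B :: "((real, 'n::{finite,wellorder}) vec, 'n) vec"
  assumes "invertible B"
  shows "finite (lat_ball B c Rad)"
proof -
  obtain B' where B': "B' ** B = mat 1"
    using assms unfolding invertible_def by blast
  obtain K where K: "0 < K" "\<And>v. norm (B' *v v) \<le> K * norm v"
    using linear_bounded_pos[OF matrix_vector_mul_linear[of B']] by blast
  have "lat_ball B c Rad \<subseteq> {x. norm (ivec x) \<le> K * (norm c + Rad)}"
  proof
    fix x
    assume "x \<in> lat_ball B c Rad"
    then have "norm (B *v ivec x) \<le> norm c + Rad"
      unfolding lat_ball_def using norm_triangle_ineq2[of "B *v ivec x" c] by simp
    have "norm (ivec x) = norm (B' *v (B *v ivec x))"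
      by (simp add: matrix_vector_mul_assoc B')
    also have "\<dots> \<le> K * norm (B *v ivec x)"
      by (rule K(2))
    also have "\<dots> \<le> K * (norm c + Rad)"
      using \<open>norm (B *v ivec x) \<le> norm c + Rad\<close> K(1) by (intro mult_left_mono) auto
    finally show "x \<in> {x. norm (ivec x) \<le> K * (norm c + Rad)}"
      by simp
  qed
  then show ?thesis
    using finite_int_vecs_norm_le by (rule finite_subset)
qed

lemma upper_triangular_mult_vec_nth:
  fixes R :: "(('a::semiring_1, 'n::{finite,linorder}) vec, 'n) vec"
  assumes upper: "\<forall>i j. j < i \<longrightarrow> R $ i $ j = 0"
  shows "(R *v v) $ i = R $ i $ i * v $ i + (\<Sum>j\<in>{j. i < j}. R $ i $ j * v $ j)"
proof -
  have "(R *v v) $ i = (\<Sum>j\<in>UNIV. R $ i $ j * v $ j)"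
    by (simp add: matrix_vector_mult_def)
  also have "\<dots> = (\<Sum>j\<in>insert i {j. i < j}. R $ i $ j * v $ j)"
  proof (rule sum.mono_neutral_right)
    show "\<forall>j\<in>UNIV - insert i {j. i < j}. R $ i $ j * v $ j = 0"
    proof
      fix j
      assume "j \<in> UNIV - insert i {j. i < j}"
      then have "j < i"
        by auto
      then show "R $ i $ j * v $ j = 0"
        by (simp add: upper)
    qed
  qed auto
  finally show ?thesis
    by simp
qed

lemma invertible_mult_upper_triangular_diag_nonzero:
  fixes Qm R :: "((real, 'n::{finite,wellorder}) vec, 'n) vec"
  assumes "invertible (Qm ** R)" and upper: "\<forall>i j. j < i \<longrightarrow> R $ i $ j = 0"
  shows "R $ i $ i \<noteq> 0"
proof -
  have "det Qm * (\<Prod>i\<in>UNIV. R $ i $ i) \<noteq> 0"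
    using assms(1) det_upperdiagonal[of R] upper by (simp add: invertible_det_nz det_mul)
  then show ?thesis
    by auto
qed

lemma gauss_QR_product:
  fixes B Qm R :: "((real, 'n::{finite,wellorder}) vec, 'n) vec"
  assumes orth: "orthogonal_matrix Qm"
    and upper: "\<forall>i j. j < i \<longrightarrow> R $ i $ j = 0"
    and BQR: "B = Qm ** R"
    and s: "0 < s" and diag: "\<And>i. R $ i $ i \<noteq> 0"
  shows "gauss s c (B *v ivec x) =
     (\<Prod>i\<in>UNIV. gauss (s / \<bar>R $ i $ i\<bar>) (klein_mu Qm R c x i) (of_int (x $ i)))"
proof -
  define y where "y = R *v ivec x - transpose Qm *v c"
  have "Qm ** transpose Qm = mat 1"
    using orth by (simp add: orthogonal_matrix_def)
  then have "Qm *v (transpose Qm *v c) = c"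
    by (simp only: matrix_vector_mul_assoc matrix_vector_mul_lid)
  then have "B *v ivec x - c = Qm *v y"
    unfolding y_def BQR by (simp add: matrix_vector_mult_diff_distrib matrix_vector_mul_assoc)
  moreover have "norm (Qm *v y) = norm y"
    using orth by (simp add: orthogonal_transformation_matrix orthogonal_transformation_norm)
  moreover have "(norm y)^2 = (\<Sum>i\<in>UNIV. (y $ i)^2)"
    unfolding power2_norm_eq_inner inner_vec_def by (simp add: power2_eq_square)
  ultimately have norm_sq: "(norm (B *v ivec x - c))^2 = (\<Sum>i\<in>UNIV. (y $ i)^2)"
    by simp
  have coord: "y $ i = R $ i $ i * (of_int (x $ i) - klein_mu Qm R c x i)" for i
    using upper_triangular_mult_vec_nth[OF upper, of "ivec x" i] diag[of i]
    by (simp add: y_def ivec_def klein_mu_def field_simps)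
  have "gauss s c (B *v ivec x) =
      (\<Prod>i\<in>UNIV. exp (- pi * (R $ i $ i * (of_int (x $ i) - klein_mu Qm R c x i))^2 / s^2))"
    unfolding gauss_def norm_sq coord[symmetric]
    by (simp add: exp_sum[symmetric] sum_divide_distrib sum_negf sum_distrib_left)
  also have "\<dots> = (\<Prod>i\<in>UNIV. gauss (s / \<bar>R $ i $ i\<bar>) (klein_mu Qm R c x i) (of_int (x $ i)))"
    by (intro prod.cong) (simp_all add: gauss_def power_mult_distrib power_divide power2_abs mult.assoc)
  finally show ?thesis .
qed

lemma klein_eq_gauss_div_prod_gaussZ:
  fixes B Qm R :: "((real, 'n::{finite,wellorder}) vec, 'n) vec"
  assumes "orthogonal_matrix Qm" "\<forall>i j. j < i \<longrightarrow> R $ i $ j = 0" "B = Qm ** R"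
    and "0 < s" "\<And>i. R $ i $ i \<noteq> 0"
  shows "klein Qm R s c x =
     gauss s c (B *v ivec x) / (\<Prod>i\<in>UNIV. gaussZ (s / \<bar>R $ i $ i\<bar>) (klein_mu Qm R c x i))"
  unfolding klein_def gauss_QR_product[OF assms] by (simp add: prod_dividef)

lemma gauss_div_prod_gaussZ_le_klein:
  fixes B Qm R :: "((real, 'n::{finite,wellorder}) vec, 'n) vec"
  assumes "orthogonal_matrix Qm" "\<forall>i j. j < i \<longrightarrow> R $ i $ j = 0" "B = Qm ** R"
    and s: "0 < s" and diag: "\<And>i. R $ i $ i \<noteq> 0"
  shows "gauss s c (B *v ivec x) / (\<Prod>i\<in>UNIV. gaussZ (s / \<bar>R $ i $ i\<bar>) 0) \<le> klein Qm R s c x"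
proof -
  have s_i: "0 < s / \<bar>R $ i $ i\<bar>" for i
    using s diag[of i] by simp
  have "(\<Prod>i\<in>UNIV. gaussZ (s / \<bar>R $ i $ i\<bar>) (klein_mu Qm R c x i))
        \<le> (\<Prod>i\<in>UNIV. gaussZ (s / \<bar>R $ i $ i\<bar>) 0)"
    using gaussZ_pos[OF s_i] gaussZ_le_gaussZ_0[OF s_i] by (intro prod_mono) (auto intro: less_imp_le)
  moreover have "0 < (\<Prod>i\<in>UNIV. gaussZ (s / \<bar>R $ i $ i\<bar>) (klein_mu Qm R c x i))"
    using gaussZ_pos[OF s_i] by (intro prod_pos) auto
  ultimately show ?thesis
    unfolding klein_eq_gauss_div_prod_gaussZ[OF assms]
    by (intro divide_left_mono) (auto intro: less_imp_le gauss_pos)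
qed

lemma normalized_dominated_weights:
  fixes \<rho> q :: "'a \<Rightarrow> real"
  assumes X: "finite X" "X \<noteq> {}" and \<rho>: "\<And>x. x \<in> X \<Longrightarrow> 0 < \<rho> x" and Z: "0 < Z"
    and dom: "\<And>x. x \<in> X \<Longrightarrow> \<rho> x / Z \<le> q x"
  shows "0 < sum \<rho> X / Z / sum q X" and "sum \<rho> X / Z / sum q X \<le> 1"
    and "x \<in> X \<Longrightarrow> sum \<rho> X / Z / sum q X * (\<rho> x / sum \<rho> X) \<le> q x / sum q X"
proof -
  have pos_\<rho>: "0 < sum \<rho> X"
    using X \<rho> by (intro sum_pos) auto
  have le: "sum \<rho> X / Z \<le> sum q X"
    unfolding sum_divide_distrib using dom by (rule sum_mono)
  have pos_q: "0 < sum q X"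
    using le divide_pos_pos[OF pos_\<rho> Z] by linarith
  show "0 < sum \<rho> X / Z / sum q X"
    using pos_\<rho> pos_q Z by simp
  show "sum \<rho> X / Z / sum q X \<le> 1"
    using le by (simp only: divide_le_eq_1_pos[OF pos_q])
  assume "x \<in> X"
  have "sum \<rho> X / Z / sum q X * (\<rho> x / sum \<rho> X) = (\<rho> x / Z) / sum q X"
    using pos_\<rho> by simp
  also have "\<dots> \<le> q x / sum q X"
    using dom[OF \<open>x \<in> X\<close>] pos_q by (intro divide_right_mono) auto
  finally show "sum \<rho> X / Z / sum q X * (\<rho> x / sum \<rho> X) \<le> q x / sum q X" .
qed

theorem proposition1:
  fixes B Qm R :: "((real,'n::{finite,wellorder}) vec,'n) vec"
    and s Rad :: real and c :: "(real,'n) vec"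
  assumes "invertible B"
    and "orthogonal_matrix Qm"
    and "\<forall>i j. j < i \<longrightarrow> R $ i $ j = 0"
    and "B = Qm ** R"
    and "s > 0" and "Rad > 0"
    and "lat_ball B c Rad \<noteq> {}"
  shows "0 < p_R B Qm R s c Rad \<and> p_R B Qm R s c Rad \<le> 1
     \<and> (\<forall>x. Q_R B Qm R s c Rad x \<ge> p_R B Qm R s c Rad * pi_R B s c Rad x)"
proof -
  have diag: "R $ i $ i \<noteq> 0" for i
    using invertible_mult_upper_triangular_diag_nonzero assms(1,3,4) by blast
  define Z where "Z = (\<Prod>i\<in>(UNIV::'n set). gaussZ (s / \<bar>R $ i $ i\<bar>) 0)"
  have "0 < Z"
    unfolding Z_def using gaussZ_pos diag assms(5) by (intro prod_pos) simp
  note bounds = normalized_dominated_weights[where \<rho>="\<lambda>x. gauss s c (B *v ivec x)" and q="klein Qm R s c",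
      OF finite_lat_ball[OF assms(1)] assms(7) gauss_pos \<open>0 < Z\<close>
      gauss_div_prod_gaussZ_le_klein[OF assms(2-5) diag, folded Z_def]]
  have p_R: "p_R B Qm R s c Rad = (\<Sum>y\<in>lat_ball B c Rad. gauss s c (B *v ivec y)) / Z
      / (\<Sum>y\<in>lat_ball B c Rad. klein Qm R s c y)"
    unfolding p_R_def Delta_R_def Z_def ..
  show ?thesis
    using bounds by (auto simp: p_R Q_R_def pi_R_def)
qed

end
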